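(* Let $G\subseteq W(\mathsf D_n)$ be a subgroup satisfying both the (H1) condition and the minimality condition. Then the action of $G$ on the set of components of degenerate fibers $\{q_j^{\pm}: 1\le j\le n\}$ has at most three orbits.
   Context: Let $X\to\mathbb P^1$ be a standard conic bundle with $n$ degenerate geometric fibers $q_j^+\cup q_j^-$. $W(\mathsf D_n)$ is the group of signed permutations of the symbols $j^\pm\leftrightarrow q_j^\pm$ (generated by $\mathfrak S_n$ permuting indices and involutions $c_j$ exchanging $j^+,j^-$) having an even number of sign changes; it acts on $\mathrm{Pic}(\bar X)=\bigoplus_{i=-1}^n\mathbb Zl_i$ via $\Phi$: for $g=c_{j_1}\cdots c_{j_t}\tau$ ($t$ even), with $s(i)=-1$ if $i\in\{j_1,\dots,j_t\}$ else $1$, $\Phi(g)l_0=l_0$, $\Phi(g)l_{-1}=l_{-1}+\frac t2l_0-\sum_{s(i)=-1}l_i$, and for $v\ge1$, $u=\tau^{-1}(v)$: $\Phi(g)l_v=l_u$ if $s(u)=1$, $\Phi(g)l_v=l_0-l_u$ if $s(u)=-1$. $G$ satisfies (H1) if $\mathrm H^1(H,\mathrm{Pic}(\bar X))=0$ for all subgroups $H\subseteq G$. $G$ satisfies the minimality condition if it corresponds to a $k$-minimal conic bundle (no Galois-equivariant blow-down possible); for standard conic bundles this entails that for each $j$ the two components $q_j^+$ and $q_j^-$ lie in the same $G$-orbit. *)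

theory Defs
  imports Main
begin

text \<open>Symbols j^+ / j^- are encoded as pairs (j, True) / (j, False), 1 \<le> j \<le> n.\<close>

definition symbols :: "nat \<Rightarrow> (nat \<times> bool) set" where
  "symbols n = {1..n} \<times> UNIV"

definition flip :: "nat \<times> bool \<Rightarrow> nat \<times> bool" where
  "flip x = (fst x, \<not> snd x)"

definition WD :: "nat \<Rightarrow> (nat \<times> bool \<Rightarrow> nat \<times> bool) set" where
  "WD n = {\<sigma>. bij_betw \<sigma> (symbols n) (symbols n)
              \<and> (\<forall>x. x \<notin> symbols n \<longrightarrow> \<sigma> x = x)
              \<and> (\<forall>x. \<sigma> (flip x) = flip (\<sigma> x))
              \<and> even (card {j \<in> {1..n}. \<not> snd (\<sigma> (j, True))})}"

definition is_subgroup :: "('a \<Rightarrow> 'a) set \<Rightarrow> ('a \<Rightarrow> 'a) set \<Rightarrow> bool" where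
  "is_subgroup H G \<longleftrightarrow> H \<subseteq> G \<and> id \<in> H \<and> (\<forall>g\<in>H. \<forall>h\<in>H. g \<circ> h \<in> H)
     \<and> (\<forall>g\<in>H. inv g \<in> H)"

text \<open>Pic(X-bar) = free abelian group on l_{-1}, l_0, ..., l_n, as integer functions supported on {-1..n}.\<close>
definition Pic :: "nat \<Rightarrow> (int \<Rightarrow> int) set" where
  "Pic n = {x. \<forall>k. k \<notin> {-1..int n} \<longrightarrow> x k = 0}"

definition lb :: "int \<Rightarrow> int \<Rightarrow> int" where
  "lb i = (\<lambda>k. if k = i then 1 else 0)"

text \<open>class of the component: q_w^+ \<mapsto> l_w, q_w^- \<mapsto> l_0 - l_w\<close>
definition cls :: "nat \<times> bool \<Rightarrow> int \<Rightarrow> int" where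
  "cls x = (if snd x then lb (int (fst x)) else (\<lambda>k. lb 0 k - lb (int (fst x)) k))"

definition negs :: "nat \<Rightarrow> (nat \<times> bool \<Rightarrow> nat \<times> bool) \<Rightarrow> nat set" where
  "negs n \<sigma> = {w \<in> {1..n}. \<exists>v \<in> {1..n}. \<sigma> (v, True) = (w, False)}"

definition phi_basis :: "nat \<Rightarrow> (nat \<times> bool \<Rightarrow> nat \<times> bool) \<Rightarrow> int \<Rightarrow> int \<Rightarrow> int" where
  "phi_basis n \<sigma> i =
     (if i = 0 then lb 0
      else if i = -1 then
        (\<lambda>k. lb (-1) k + (int (card (negs n \<sigma>)) div 2) * lb 0 k
              - (\<Sum>w\<in>negs n \<sigma>. lb (int w) k))
      else cls (\<sigma> (nat i, True)))"

definition Phi :: "nat \<Rightarrow> (nat \<times> bool \<Rightarrow> nat \<times> bool) \<Rightarrow> (int \<Rightarrow> int) \<Rightarrow> int \<Rightarrow> int" where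
  "Phi n \<sigma> x = (\<lambda>k. \<Sum>i\<in>{-1..int n}. x i * phi_basis n \<sigma> i k)"

definition H1_vanishes :: "nat \<Rightarrow> (nat \<times> bool \<Rightarrow> nat \<times> bool) set \<Rightarrow> bool" where
  "H1_vanishes n H \<longleftrightarrow>
     (\<forall>f. (\<forall>g\<in>H. f g \<in> Pic n)
          \<and> (\<forall>g\<in>H. \<forall>h\<in>H. f (g \<circ> h) = (\<lambda>k. f g k + Phi n g (f h) k))
        \<longrightarrow> (\<exists>m\<in>Pic n. \<forall>g\<in>H. f g = (\<lambda>k. Phi n g m k - m k)))"

definition condH1 :: "nat \<Rightarrow> (nat \<times> bool \<Rightarrow> nat \<times> bool) set \<Rightarrow> bool" where
  "condH1 n G \<longleftrightarrow> (\<forall>H. is_subgroup H G \<longrightarrow> H1_vanishes n H)"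

definition minimal_cond :: "nat \<Rightarrow> (nat \<times> bool \<Rightarrow> nat \<times> bool) set \<Rightarrow> bool" where
  "minimal_cond n G \<longleftrightarrow> (\<forall>j\<in>{1..n}. \<exists>g\<in>G. g (j, True) = (j, False))"

definition orbits :: "nat \<Rightarrow> (nat \<times> bool \<Rightarrow> nat \<times> bool) set \<Rightarrow> (nat \<times> bool) set set" where
  "orbits n G = (\<lambda>x. (\<lambda>g. g x) ` G) ` symbols n"

end

(*
  By minimality every orbit is a union of whole fibres {q_j^+, q_j^-}, hence determined by the
  block of indices it covers, and on a G-stable block A the parity of the number of sign
  changes is a character G -> Z/2. If a subgroup H is even on A and flips an index inside A as
  well as one outside, then h |-> (h M - M)/2, with M the sum of the l_u over A, is a crossed
  homomorphism that is not principal, so (H1) fails. Given four orbits with blocks A1, ..., A4,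
  this applied to G shows that the four characters are nontrivial; since they sum to zero, some
  g is odd on every block. The kernel H of the sum of the first two characters contains g; as a
  subgroup without flips inside a block is even on it, H flips an index in A1 and one in A3,
  while H is even on the union of A1 and A2.
*)
theory Submission
  imports Defs
begin

lemma even_card_xor_bij:
  assumes "finite A" and "bij_betw \<pi> A A"
  shows "even (card {u\<in>A. a u \<noteq> b (\<pi> u)}) \<longleftrightarrow> even (card {u\<in>A. a u} + card {u\<in>A. b u})"
proof -
  have card_eq: "card {u\<in>A. P u} = (\<Sum>u\<in>A. of_bool (P u))" for P
    using assms(1) by (simp add: sum_of_bool_eq Int_def)
  have "(\<Sum>u\<in>A. of_bool (a u) + of_bool (b (\<pi> u)) :: nat) = card {u\<in>A. a u} + card {u\<in>A. b u}"
    using sum.reindex_bij_betw[OF assms(2), of "\<lambda>w. of_bool (b w)"] by (simp add: sum.distrib card_eq)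
  moreover have "odd (of_bool (a u) + of_bool (b (\<pi> u)) :: nat) \<longleftrightarrow> a u \<noteq> b (\<pi> u)" for u
    by simp
  ultimately show ?thesis
    using even_sum_iff[OF assms(1), of "\<lambda>u. of_bool (a u) + of_bool (b (\<pi> u)) :: nat"] by simp
qed

definition index_map :: "(nat \<times> bool \<Rightarrow> nat \<times> bool) \<Rightarrow> nat \<Rightarrow> nat" where
  "index_map \<sigma> u = fst (\<sigma> (u, True))"

definition sign_changes :: "(nat \<times> bool \<Rightarrow> nat \<times> bool) \<Rightarrow> nat set \<Rightarrow> nat set" where
  "sign_changes \<sigma> A = {u \<in> A. \<not> snd (\<sigma> (u, True))}"

definition sign_parity :: "nat set \<Rightarrow> (nat \<times> bool \<Rightarrow> nat \<times> bool) \<Rightarrow> bool" where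
  "sign_parity A \<sigma> \<longleftrightarrow> odd (card (sign_changes \<sigma> A))"

definition index_stable :: "(nat \<times> bool \<Rightarrow> nat \<times> bool) set \<Rightarrow> nat set \<Rightarrow> bool" where
  "index_stable H A \<longleftrightarrow> (\<forall>h\<in>H. index_map h ` A \<subseteq> A)"

lemma flip_Pair [simp]: "flip (a, b) = (a, \<not> b)"
  by (simp add: flip_def)

lemma mem_flip_image: "x \<in> flip ` S \<longleftrightarrow> flip x \<in> S"
  by (force simp: flip_def)

lemma WD_flip: "\<sigma> \<in> WD n \<Longrightarrow> \<sigma> (flip x) = flip (\<sigma> x)"
  unfolding WD_def by blast

lemma WD_apply_False: "\<sigma> \<in> WD n \<Longrightarrow> \<sigma> (u, False) = (index_map \<sigma> u, \<not> snd (\<sigma> (u, True)))"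
  using WD_flip[of \<sigma> n "(u, True)"] by (simp add: flip_def index_map_def)

lemma WD_apply_eq: "\<sigma> \<in> WD n \<Longrightarrow> \<sigma> (u, b) = (index_map \<sigma> u, b = snd (\<sigma> (u, True)))"
  by (cases b) (simp_all add: WD_apply_False index_map_def)

lemma bij_WD:
  assumes "\<sigma> \<in> WD n"
  shows "bij \<sigma>"
proof -
  have "\<sigma> x = id x" if "x \<in> - symbols n" for x
    using that assms unfolding WD_def mem_Collect_eq by (metis ComplD id_apply)
  then have "bij_betw \<sigma> (- symbols n) (- symbols n)"
    using bij_betw_cong[of "- symbols n" \<sigma> id "- symbols n"] bij_betw_id by blast
  moreover have "bij_betw \<sigma> (symbols n) (symbols n)"
    using assms by (simp add: WD_def)
  ultimately show ?thesis
    using bij_betw_combine[of \<sigma> "symbols n" "symbols n" "- symbols n" "- symbols n"] by simp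
qed

lemma inv_WD_apply: "\<sigma> \<in> WD n \<Longrightarrow> inv \<sigma> (\<sigma> x) = x"
  using bij_WD bij_is_inj inv_f_f by metis

lemma WD_apply_inv: "\<sigma> \<in> WD n \<Longrightarrow> \<sigma> (inv \<sigma> x) = x"
  using bij_WD bij_is_surj surj_f_inv_f by metis

lemma WD_symbols: "\<sigma> \<in> WD n \<Longrightarrow> x \<in> symbols n \<Longrightarrow> \<sigma> x \<in> symbols n"
  by (auto simp: WD_def bij_betw_def)

lemma index_map_in_range: "\<sigma> \<in> WD n \<Longrightarrow> u \<in> {1..n} \<Longrightarrow> index_map \<sigma> u \<in> {1..n}"
  using WD_symbols[of \<sigma> n "(u, True)"] by (auto simp: symbols_def index_map_def)

lemma inj_index_map:
  assumes "\<sigma> \<in> WD n"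
  shows "inj (index_map \<sigma>)"
proof (rule injI)
  fix u v assume "index_map \<sigma> u = index_map \<sigma> v"
  then have "\<sigma> (u, True) = \<sigma> (v, snd (\<sigma> (u, True)) = snd (\<sigma> (v, True)))"
    using WD_apply_eq[OF assms, of v "snd (\<sigma> (u, True)) = snd (\<sigma> (v, True))"]
    by (auto simp: index_map_def prod_eq_iff)
  then show "u = v"
    using bij_WD[OF assms] by (auto dest: bij_is_inj injD)
qed

lemma bij_betw_index_map:
  assumes "\<sigma> \<in> WD n" "finite A" "index_map \<sigma> ` A \<subseteq> A"
  shows "bij_betw (index_map \<sigma>) A A"
proof -
  have "inj_on (index_map \<sigma>) A"
    using inj_index_map[OF assms(1)] by (rule inj_on_subset) simp
  then show ?thesis
    using assms(2,3) by (simp add: bij_betw_def endo_inj_surj)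
qed

lemma snd_comp_WD:
  assumes "g \<in> WD n"
  shows "snd ((g \<circ> h) (u, True)) = (snd (h (u, True)) = snd (g (index_map h u, True)))"
proof -
  obtain w b where "h (u, True) = (w, b)" by fastforce
  then show ?thesis
    using WD_apply_False[OF assms, of w] by (cases b) (simp_all add: index_map_def)
qed

section \<open>Orbits\<close>

definition orbit :: "('a \<Rightarrow> 'a) set \<Rightarrow> 'a \<Rightarrow> 'a set" where
  "orbit G x = (\<lambda>g. g x) ` G"

lemma orbits_eq: "orbits n G = orbit G ` symbols n"
  by (simp add: orbits_def orbit_def image_image)

lemma is_subgroupD:
  assumes "is_subgroup H G"
  shows "H \<subseteq> G" and "id \<in> H" and "g \<in> H \<Longrightarrow> h \<in> H \<Longrightarrow> g \<circ> h \<in> H"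
    and "g \<in> H \<Longrightarrow> inv g \<in> H"
  using assms by (auto simp: is_subgroup_def)

lemma is_subgroup_superset: "is_subgroup H G \<Longrightarrow> G \<subseteq> K \<Longrightarrow> is_subgroup H K"
  by (auto simp: is_subgroup_def)

lemma mem_orbit_iff: "y \<in> orbit G x \<longleftrightarrow> (\<exists>g\<in>G. y = g x)"
  by (auto simp: orbit_def)

lemma orbit_self: "id \<in> G \<Longrightarrow> x \<in> orbit G x"
  unfolding mem_orbit_iff by (metis id_apply)

lemma orbit_closed:
  assumes "is_subgroup G K" and "g \<in> G" and "y \<in> orbit G x"
  shows "g y \<in> orbit G x"
  using assms is_subgroupD(3)[OF assms(1)] unfolding mem_orbit_iff by (metis comp_apply)

lemma orbit_apply:
  assumes G: "is_subgroup G (WD n)" and g: "g \<in> G"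
  shows "orbit G (g x) = orbit G x"
proof (intro set_eqI iffI)
  fix y assume "y \<in> orbit G (g x)"
  then show "y \<in> orbit G x"
    using g is_subgroupD(3)[OF G] unfolding mem_orbit_iff by (metis comp_apply)
next
  fix y assume "y \<in> orbit G x"
  then obtain h where h: "h \<in> G" "y = h x"
    unfolding mem_orbit_iff by blast
  have "inv g (g x) = x"
    using inv_WD_apply g is_subgroupD(1)[OF G] by blast
  then have "y = (h \<circ> inv g) (g x)"
    using h(2) by simp
  moreover have "h \<circ> inv g \<in> G"
    using g h(1) is_subgroupD(3,4)[OF G] by blast
  ultimately show "y \<in> orbit G (g x)"
    unfolding mem_orbit_iff by blast
qed

lemma orbit_eq:
  assumes "is_subgroup G (WD n)" and "y \<in> orbit G x"
  shows "orbit G y = orbit G x"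
proof -
  obtain g where "g \<in> G" "y = g x"
    using assms(2) unfolding mem_orbit_iff by blast
  then show ?thesis
    using orbit_apply[OF assms(1)] by simp
qed

lemma orbit_flip:
  assumes "G \<subseteq> WD n"
  shows "orbit G (flip x) = flip ` orbit G x"
proof -
  have "g (flip x) = flip (g x)" if "g \<in> G" for g
    using that assms WD_flip by blast
  then show ?thesis
    unfolding orbit_def image_image by (rule image_cong[OF refl])
qed

lemma orbit_subset_symbols: "G \<subseteq> WD n \<Longrightarrow> x \<in> symbols n \<Longrightarrow> orbit G x \<subseteq> symbols n"
  by (auto simp: orbit_def WD_symbols subset_iff)

lemma flip_in_orbit:
  assumes G: "is_subgroup G (WD n)" and "minimal_cond n G" and "x \<in> symbols n"
  shows "flip x \<in> orbit G x"
proof -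
  obtain j b where x: "x = (j, b)" and "j \<in> {1..n}"
    using assms(3) by (auto simp: symbols_def)
  then obtain g where g: "g \<in> G" "g (j, True) = (j, False)"
    using assms(2) unfolding minimal_cond_def by blast
  then have "g x = flip x"
    using x WD_apply_False[of g n j] is_subgroupD(1)[OF G]
    by (cases b) (auto simp: index_map_def)
  then show ?thesis
    using g(1) unfolding mem_orbit_iff by metis
qed

lemma orbits_flip_closed:
  assumes G: "is_subgroup G (WD n)" and "minimal_cond n G" and Q: "Q \<in> orbits n G"
    and "y \<in> Q"
  shows "flip y \<in> Q"
proof -
  obtain x where x: "x \<in> symbols n" "Q = orbit G x"
    using Q by (auto simp: orbits_eq)
  then have "orbit G (flip x) = Q"
    using orbit_eq[OF G flip_in_orbit[OF assms(1,2)]] by simp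
  then show ?thesis
    using orbit_flip[OF is_subgroupD(1)[OF G], of x] x(2) \<open>y \<in> Q\<close> by auto
qed

lemma orbits_mem_True_iff:
  assumes "is_subgroup G (WD n)" and "minimal_cond n G" and "Q \<in> orbits n G"
  shows "(u, True) \<in> Q \<longleftrightarrow> u \<in> fst ` Q"
proof
  assume "u \<in> fst ` Q"
  then obtain b where "(u, b) \<in> Q"
    by force
  then show "(u, True) \<in> Q"
    using orbits_flip_closed[OF assms, of "(u, b)"] by (cases b) simp_all
qed force

definition index_block :: "(nat \<times> bool) set set \<Rightarrow> nat set" where
  "index_block \<Q> = fst ` \<Union>\<Q>"

lemma index_block_Un: "index_block (\<Q> \<union> \<Q>') = index_block \<Q> \<union> index_block \<Q>'"
  by (simp add: index_block_def image_Un)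

lemma index_stable_index_block:
  assumes G: "is_subgroup G (WD n)" and "minimal_cond n G" and "\<Q> \<subseteq> orbits n G"
  shows "index_stable G (index_block \<Q>)"
  unfolding index_stable_def index_block_def
proof (intro ballI subsetI)
  fix g w assume g: "g \<in> G" and "w \<in> index_map g ` fst ` \<Union>\<Q>"
  then obtain u Q where "w = index_map g u" "Q \<in> \<Q>" "u \<in> fst ` Q"
    by blast
  moreover from this have "(u, True) \<in> Q" and Q: "Q \<in> orbits n G"
    using orbits_mem_True_iff[OF assms(1,2)] assms(3) by blast+
  moreover from Q obtain x where "Q = orbit G x"
    by (auto simp: orbits_eq)
  ultimately have "g (u, True) \<in> Q"
    using orbit_closed[OF G g] by simp
  then show "w \<in> fst ` \<Union>\<Q>"
    using \<open>Q \<in> \<Q>\<close> \<open>w = index_map g u\<close> by (force simp: index_map_def)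
qed

lemma index_block_disjoint:
  assumes G: "is_subgroup G (WD n)" and "minimal_cond n G"
    and "\<Q>\<^sub>1 \<subseteq> orbits n G" "\<Q>\<^sub>2 \<subseteq> orbits n G" "\<Q>\<^sub>1 \<inter> \<Q>\<^sub>2 = {}"
  shows "index_block \<Q>\<^sub>1 \<inter> index_block \<Q>\<^sub>2 = {}"
  unfolding index_block_def
proof (rule ccontr)
  assume "fst ` \<Union>\<Q>\<^sub>1 \<inter> fst ` \<Union>\<Q>\<^sub>2 \<noteq> {}"
  then obtain u Q\<^sub>1 Q\<^sub>2 where Q: "Q\<^sub>1 \<in> \<Q>\<^sub>1" "Q\<^sub>2 \<in> \<Q>\<^sub>2" "u \<in> fst ` Q\<^sub>1" "u \<in> fst ` Q\<^sub>2"
    by blast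
  then have "(u, True) \<in> Q\<^sub>1" "(u, True) \<in> Q\<^sub>2"
    using orbits_mem_True_iff[OF assms(1,2)] assms(3,4) by blast+
  moreover obtain x\<^sub>1 x\<^sub>2 where "Q\<^sub>1 = orbit G x\<^sub>1" "Q\<^sub>2 = orbit G x\<^sub>2"
    using Q(1,2) assms(3,4) unfolding orbits_eq by blast
  ultimately have "Q\<^sub>1 = Q\<^sub>2"
    using orbit_eq[OF G] by metis
  then show False
    using Q(1,2) assms(5) by blast
qed

lemma index_block_nonempty:
  assumes "is_subgroup G (WD n)" and "\<Q> \<subseteq> orbits n G" "\<Q> \<noteq> {}"
  shows "index_block \<Q> \<noteq> {}"
proof -
  obtain Q where "Q \<in> \<Q>"
    using assms(3) by blast
  moreover from this obtain x where "Q = orbit G x"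
    using assms(2) by (auto simp: orbits_eq)
  ultimately show ?thesis
    using orbit_self[OF is_subgroupD(2)[OF assms(1)]] unfolding index_block_def by blast
qed

lemma index_block_orbits:
  assumes "is_subgroup G (WD n)"
  shows "index_block (orbits n G) = {1..n}"
proof -
  have "\<Union>(orbits n G) = symbols n"
    using orbit_subset_symbols[OF is_subgroupD(1)[OF assms]] orbit_self[OF is_subgroupD(2)[OF assms]]
    by (fastforce simp: orbits_eq)
  then show ?thesis
    by (force simp: index_block_def symbols_def)
qed

section \<open>The sign character of a stable block\<close>

lemma sign_parity_id: "\<not> sign_parity A id"
  by (simp add: sign_parity_def sign_changes_def)

lemma sign_parity_WD: "\<sigma> \<in> WD n \<Longrightarrow> \<not> sign_parity {1..n} \<sigma>"
  by (simp add: WD_def sign_parity_def sign_changes_def)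

lemma sign_parity_Un:
  assumes "finite A" "finite B" "A \<inter> B = {}"
  shows "sign_parity (A \<union> B) \<sigma> \<longleftrightarrow> sign_parity A \<sigma> \<noteq> sign_parity B \<sigma>"
proof -
  have "sign_changes \<sigma> (A \<union> B) = sign_changes \<sigma> A \<union> sign_changes \<sigma> B"
    and "sign_changes \<sigma> A \<inter> sign_changes \<sigma> B = {}"
    using assms(3) by (auto simp: sign_changes_def)
  moreover have "finite (sign_changes \<sigma> A)" "finite (sign_changes \<sigma> B)"
    using assms(1,2) by (simp_all add: sign_changes_def)
  ultimately show ?thesis
    by (simp add: sign_parity_def card_Un_disjoint)
qed

lemma sign_parity_comp:
  assumes H: "H \<subseteq> WD n" and "finite A" and stable: "index_stable H A" and "g \<in> H" "h \<in> H"
  shows "sign_parity A (g \<circ> h) \<longleftrightarrow> sign_parity A g \<noteq> sign_parity A h"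
proof -
  have WD: "g \<in> WD n" "h \<in> WD n"
    using H assms(4,5) by auto
  then have "sign_changes (g \<circ> h) A
      = {u\<in>A. (\<not> snd (h (u, True))) \<noteq> (\<not> snd (g (index_map h u, True)))}"
    using snd_comp_WD[of g n h] by (auto simp: sign_changes_def)
  moreover have "index_map h ` A \<subseteq> A"
    using stable assms(5) by (simp add: index_stable_def)
  ultimately show ?thesis
    using even_card_xor_bij[OF \<open>finite A\<close> bij_betw_index_map[OF WD(2) \<open>finite A\<close>],
        of "\<lambda>u. \<not> snd (h (u, True))" "\<lambda>w. \<not> snd (g (w, True))"]
    by (auto simp: sign_parity_def sign_changes_def)
qed

lemma sign_parity_inv:
  assumes H: "is_subgroup H (WD n)" and "finite A" and "index_stable H A" and h: "h \<in> H"
  shows "sign_parity A (inv h) \<longleftrightarrow> sign_parity A h"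
proof -
  have "h \<circ> inv h = id"
    using WD_apply_inv h is_subgroupD(1)[OF H] by fastforce
  then show ?thesis
    using sign_parity_comp[OF is_subgroupD(1)[OF H] assms(2,3) h is_subgroupD(4)[OF H h]]
      sign_parity_id by metis
qed

lemma is_subgroup_sign_parity_eq:
  assumes G: "is_subgroup G (WD n)" and "finite A" "finite B"
    and "index_stable G A" "index_stable G B"
  shows "is_subgroup {h\<in>G. sign_parity A h = sign_parity B h} G"
proof -
  let ?K = "{h\<in>G. sign_parity A h = sign_parity B h}"
  have "g \<circ> h \<in> ?K" if "g \<in> ?K" "h \<in> ?K" for g h
    using that is_subgroupD(3)[OF G] sign_parity_comp[OF is_subgroupD(1)[OF G] assms(2,4)]
      sign_parity_comp[OF is_subgroupD(1)[OF G] assms(3,5)] by auto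
  moreover have "inv g \<in> ?K" if "g \<in> ?K" for g
    using that is_subgroupD(4)[OF G] sign_parity_inv[OF G assms(2,4)]
      sign_parity_inv[OF G assms(3,5)] by auto
  moreover have "id \<in> ?K"
    using is_subgroupD(2)[OF G] sign_parity_id by auto
  ultimately show ?thesis
    unfolding is_subgroup_def by blast
qed

lemma orbit_index_map:
  assumes H: "is_subgroup H (WD n)" and \<sigma>: "\<sigma> \<in> H"
  shows "orbit H (index_map \<sigma> u, True)
    = (if snd (\<sigma> (u, True)) then orbit H (u, True) else flip ` orbit H (u, True))"
proof -
  have "\<sigma> \<in> WD n"
    using \<sigma> is_subgroupD(1)[OF H] by blast
  then have "(index_map \<sigma> u, True) = \<sigma> (u, snd (\<sigma> (u, True)))"
    by (subst WD_apply_eq) simp_all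
  then have "orbit H (index_map \<sigma> u, True) = orbit H (u, snd (\<sigma> (u, True)))"
    using orbit_apply[OF H \<sigma>] by simp
  then show ?thesis
    using orbit_flip[OF is_subgroupD(1)[OF H], of "(u, True)"] by simp
qed

lemma fst_orbit_subset:
  assumes "index_stable H A" and "u \<in> A"
  shows "fst ` orbit H (u, True) \<subseteq> A"
  using assms by (auto simp: orbit_def index_stable_def index_map_def image_subset_iff)

lemma orbit_no_flip:
  assumes H: "is_subgroup H (WD n)" and "index_stable H A"
    and no_flip: "\<forall>h\<in>H. \<forall>u\<in>A. h (u, True) \<noteq> (u, False)"
    and "u \<in> A" and "(w, True) \<in> orbit H (u, True)"
  shows "(w, False) \<notin> orbit H (u, True)"
proof
  assume "(w, False) \<in> orbit H (u, True)"
  then have "(w, False) \<in> orbit H (w, True)"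
    using orbit_eq[OF H assms(5)] by simp
  moreover have "w \<in> A"
    using fst_orbit_subset[OF assms(2,4)] assms(5) by force
  ultimately show False
    using no_flip unfolding mem_orbit_iff by metis
qed

text \<open>
  Without flips inside A, every H-orbit over A meets the fibre over its least index in exactly
  one point; recording its sign gives a function s with sign changes of g exactly where
  s differs from s after the index map of g, so there is an even number of them.\<close>
lemma sign_parity_no_flip:
  assumes H: "is_subgroup H (WD n)" and "finite A" and stable: "index_stable H A"
    and no_flip: "\<forall>h\<in>H. \<forall>u\<in>A. h (u, True) \<noteq> (u, False)" and g: "g \<in> H"
  shows "\<not> sign_parity A g"
proof -
  define r where "r u = Min (fst ` orbit H (u, True))" for u
  define s where "s u \<longleftrightarrow> (r u, True) \<in> orbit H (u, True)" for u
  have r_in: "r u \<in> fst ` orbit H (u, True)" if "u \<in> A" for u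
  proof -
    have "fst ` orbit H (u, True) \<subseteq> A"
      using fst_orbit_subset[OF stable that] .
    then show ?thesis
      unfolding r_def using \<open>finite A\<close> orbit_self[OF is_subgroupD(2)[OF H]]
      by (intro Min_in) (auto intro: finite_subset)
  qed
  have s_iff: "s u \<longleftrightarrow> (r u, False) \<notin> orbit H (u, True)" if u: "u \<in> A" for u
  proof -
    obtain b where "(r u, b) \<in> orbit H (u, True)"
      using r_in[OF u] by force
    then show ?thesis
      using orbit_no_flip[OF H stable no_flip u] unfolding s_def by (cases b) auto
  qed
  have "u \<in> sign_changes g A \<longleftrightarrow> s u \<noteq> s (index_map g u)" if u: "u \<in> A" for u
  proof -
    have "r (index_map g u) = r u"
      unfolding r_def orbit_index_map[OF H g] by (simp add: image_image flip_def)
    moreover have "index_map g u \<in> A"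
      using stable g u by (auto simp: index_stable_def)
    ultimately show ?thesis
      using s_iff u unfolding sign_changes_def s_def orbit_index_map[OF H g]
      by (auto simp: mem_flip_image)
  qed
  then have "sign_changes g A = {u\<in>A. s u \<noteq> s (index_map g u)}"
    by (auto simp: sign_changes_def)
  moreover have "bij_betw (index_map g) A A"
    using bij_betw_index_map g stable \<open>finite A\<close> is_subgroupD(1)[OF H]
    by (auto simp: index_stable_def)
  ultimately show ?thesis
    using even_card_xor_bij[OF \<open>finite A\<close>, of "index_map g" s s] by (simp add: sign_parity_def)
qed

section \<open>The action on the Picard lattice\<close>

definition lsum :: "nat set \<Rightarrow> int \<Rightarrow> int" where
  "lsum A = (\<lambda>k. \<Sum>u\<in>A. lb (int u) k)"

lemma cls_apply:
  "cls y k = (if k = int (fst y) then (if snd y then 1 else -1) else 0) + (if k = 0 \<and> \<not> snd y then 1 else 0)"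
  by (auto simp: cls_def lb_def)

lemma lsum_apply:
  assumes "finite A"
  shows "lsum A k = of_bool (k \<in> int ` A)"
proof (cases "k \<in> int ` A")
  case True
  then obtain u\<^sub>0 where "u\<^sub>0 \<in> A" "k = int u\<^sub>0"
    by blast
  then show ?thesis
    using assms by (simp add: lsum_def lb_def sum.delta')
qed (auto simp: lsum_def lb_def intro!: sum.neutral)

lemma lsum_in_Pic: "A \<subseteq> {1..n} \<Longrightarrow> lsum A \<in> Pic n"
  using finite_subset[of A "{1..n}"] by (force simp: Pic_def lsum_apply)

lemma Phi_lb:
  assumes "i \<in> {-1..int n}"
  shows "Phi n \<sigma> (lb i) = phi_basis n \<sigma> i"
proof
  fix k
  have "Phi n \<sigma> (lb i) k = (\<Sum>i'\<in>{-1..int n}. if i' = i then phi_basis n \<sigma> i' k else 0)"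
    unfolding Phi_def lb_def by (rule sum.cong) auto
  then show "Phi n \<sigma> (lb i) k = phi_basis n \<sigma> i k"
    using assms by (simp add: sum.delta')
qed

lemma Phi_add: "Phi n \<sigma> (\<lambda>k. x k + y k) = (\<lambda>k. Phi n \<sigma> x k + Phi n \<sigma> y k)"
  by (simp add: Phi_def distrib_right sum.distrib)

lemma Phi_diff: "Phi n \<sigma> (\<lambda>k. x k - y k) = (\<lambda>k. Phi n \<sigma> x k - Phi n \<sigma> y k)"
  by (simp add: Phi_def left_diff_distrib sum_subtractf)

lemma Phi_smult: "Phi n \<sigma> (\<lambda>k. c * x k) = (\<lambda>k. c * Phi n \<sigma> x k)"
  by (simp add: Phi_def sum_distrib_left mult.assoc)

lemma Phi_sum: "Phi n \<sigma> (\<lambda>k. \<Sum>u\<in>S. v u k) = (\<lambda>k. \<Sum>u\<in>S. Phi n \<sigma> (v u) k)"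
  unfolding Phi_def sum_distrib_right by (rule ext, rule sum.swap)

lemma Phi_cls_True: "u \<in> {1..n} \<Longrightarrow> Phi n \<sigma> (cls (u, True)) = cls (\<sigma> (u, True))"
  using Phi_lb[of "int u" n \<sigma>] by (simp add: cls_def phi_basis_def)

lemma Phi_cls:
  assumes \<sigma>: "\<sigma> \<in> WD n" and x: "x \<in> symbols n"
  shows "Phi n \<sigma> (cls x) = cls (\<sigma> x)"
proof -
  obtain u b where ub: "x = (u, b)" and u: "u \<in> {1..n}"
    using x by (auto simp: symbols_def)
  show ?thesis
  proof (cases b)
    case False
    have "cls (u, False) = (\<lambda>k. lb 0 k - cls (u, True) k)"
      by (simp add: cls_def)
    then have "Phi n \<sigma> (cls (u, False)) = (\<lambda>k. lb 0 k - cls (\<sigma> (u, True)) k)"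
      using Phi_lb[of 0 n \<sigma>] Phi_cls_True[OF u] by (simp add: Phi_diff phi_basis_def)
    also have "\<dots> = cls (\<sigma> (u, False))"
      using WD_apply_False[OF \<sigma>, of u] by (auto simp: cls_apply lb_def index_map_def)
    finally show ?thesis
      using ub False by simp
  qed (use ub Phi_cls_True[OF u] in simp)
qed

lemma lsum_eq_sum_cls: "lsum A = (\<lambda>k. \<Sum>u\<in>A. cls (u, True) k)"
  by (simp add: lsum_def cls_def)

lemma Phi_lsum:
  assumes "A \<subseteq> {1..n}"
  shows "Phi n \<sigma> (lsum A) = (\<lambda>k. \<Sum>u\<in>A. cls (\<sigma> (u, True)) k)"
  unfolding lsum_eq_sum_cls Phi_sum
  by (rule ext, rule sum.cong) (use assms Phi_cls_True in auto)

lemma Phi_comp_lsum: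
  assumes "g \<in> WD n" "h \<in> WD n" "A \<subseteq> {1..n}"
  shows "Phi n (g \<circ> h) (lsum A) = Phi n g (Phi n h (lsum A))"
proof -
  have "h (u, True) \<in> symbols n" if "u \<in> A" for u
    using that assms(2,3) WD_symbols by (force simp: symbols_def)
  then show ?thesis
    using Phi_cls[OF assms(1)] by (auto simp: Phi_lsum[OF assms(3)] Phi_sum intro!: sum.cong)
qed

lemma Phi_in_Pic:
  assumes \<sigma>: "\<sigma> \<in> WD n"
  shows "Phi n \<sigma> x \<in> Pic n"
proof -
  have "phi_basis n \<sigma> i k = 0" if i: "i \<in> {-1..int n}" and k: "k \<notin> {-1..int n}" for i k
  proof (cases "i \<ge> 1")
    case True
    then have "index_map \<sigma> (nat i) \<in> {1..n}"
      using index_map_in_range[OF \<sigma>, of "nat i"] i by (simp add: le_nat_iff nat_le_iff)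
    then show ?thesis
      using True k by (auto simp: phi_basis_def cls_apply index_map_def)
  next
    case False
    then have "i = -1 \<or> i = 0"
      using i by auto
    moreover have "negs n \<sigma> \<subseteq> {1..n}"
      by (auto simp: negs_def)
    ultimately show ?thesis
      using k by (auto simp: phi_basis_def lb_def intro!: sum.neutral)
  qed
  then show ?thesis
    by (simp add: Phi_def Pic_def)
qed

lemma Phi_apply_flipped:
  assumes g: "g \<in> WD n" and j: "j \<in> {1..n}" and gj: "g (j, True) = (j, False)"
  shows "Phi n g x (int j) = - x (-1) - x (int j)"
proof -
  have "phi_basis n g i (int j) = - of_bool (i = -1) - of_bool (i = int j)"
    if i: "i \<in> {-1..int n}" for i
  proof -
    have "j \<in> negs n g"
      using j gj unfolding negs_def by blast
    then have "(\<Sum>w\<in>negs n g. lb (int w) (int j)) = 1"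
      by (simp add: lb_def negs_def)
    moreover have "index_map g (nat i) = j \<longleftrightarrow> nat i = j"
      using inj_index_map[OF g] gj by (metis fst_conv index_map_def injD)
    ultimately show ?thesis
      using i j gj by (auto simp: phi_basis_def lb_def cls_apply index_map_def)
  qed
  then have "Phi n g x (int j)
      = (\<Sum>i\<in>{-1..int n}. - (if i = -1 then x i else 0) - (if i = int j then x i else 0))"
    unfolding Phi_def by (intro sum.cong) auto
  also have "\<dots> = - x (-1) - x (int j)"
    using j by (simp add: sum_subtractf sum_negf)
  finally show ?thesis .
qed

section \<open>An obstruction to the vanishing of H^1\<close>

lemma even_Phi_lsum_diff:
  assumes \<sigma>: "\<sigma> \<in> WD n" and A: "A \<subseteq> {1..n}" and stable: "index_map \<sigma> ` A \<subseteq> A"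
    and even: "\<not> sign_parity A \<sigma>"
  shows "even (Phi n \<sigma> (lsum A) k - lsum A k)"
proof -
  define P where "P u \<longleftrightarrow>
    (if k = 0 then u \<in> sign_changes \<sigma> A else (k = int u) \<noteq> (k = int (index_map \<sigma> u)))" for u
  have fin: "finite A"
    using A finite_subset by blast
  have "index_map \<sigma> u \<ge> 1" if "u \<in> A" for u
    using index_map_in_range[OF \<sigma>] that A by force
  then have "{u\<in>A. odd (cls (\<sigma> (u, True)) k - lb (int u) k)} = {u\<in>A. P u}"
    using A by (force simp: P_def cls_apply lb_def index_map_def sign_changes_def)
  moreover have "Phi n \<sigma> (lsum A) k - lsum A k = (\<Sum>u\<in>A. cls (\<sigma> (u, True)) k - lb (int u) k)"
    using Phi_lsum[OF A, of \<sigma>] by (simp add: lsum_def sum_subtractf)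
  moreover have "even (card {u\<in>A. P u})"
  proof (cases "k = 0")
    case True
    then have "{u\<in>A. P u} = sign_changes \<sigma> A"
      by (auto simp: P_def sign_changes_def)
    then show ?thesis
      using even by (simp add: sign_parity_def)
  next
    case False
    then show ?thesis
      using even_card_xor_bij[OF fin bij_betw_index_map[OF \<sigma> fin stable],
          of "\<lambda>u. k = int u" "\<lambda>u. k = int u"]
      by (simp add: P_def)
  qed
  ultimately show ?thesis
    by (simp add: even_sum_iff[OF fin])
qed

text \<open>
  With M the sum of the l_u over A, f h = (h M - M) / 2 is a crossed homomorphism. If it were
  principal, f h = h m - m, then evaluating at the coordinate of an index flipped by h, where
  (h x)_j = - x_{-1} - x_j, would give m_{-1} + 2 m_j = 1 for j in A but m_{-1} + 2 m_k = 0
  for k outside A.\<close>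
lemma stable_block_not_H1_vanishes:
  assumes H: "H \<subseteq> WD n" and A: "A \<subseteq> {1..n}" and stable: "index_stable H A"
    and even: "\<forall>h\<in>H. \<not> sign_parity A h"
    and j: "j \<in> A" "h\<^sub>1 \<in> H" "h\<^sub>1 (j, True) = (j, False)"
    and k: "k \<in> {1..n}" "k \<notin> A" "h\<^sub>2 \<in> H" "h\<^sub>2 (k, True) = (k, False)"
  shows "\<not> H1_vanishes n H"
proof
  assume vanishes: "H1_vanishes n H"
  define f where "f \<sigma> = (\<lambda>i. (Phi n \<sigma> (lsum A) i - lsum A i) div 2)" for \<sigma>
  have double: "Phi n h (lsum A) = (\<lambda>i. 2 * f h i + lsum A i)" if "h \<in> H" for h
    using even_Phi_lsum_diff[of h n A] that H A stable even
    by (auto simp: f_def index_stable_def fun_eq_iff)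
  have "f h \<in> Pic n" if "h \<in> H" for h
    using Phi_in_Pic[of h n "lsum A"] lsum_in_Pic[OF A] that H by (auto simp: Pic_def f_def)
  moreover have "f (g \<circ> h) = (\<lambda>i. f g i + Phi n g (f h) i)" if "g \<in> H" "h \<in> H" for g h
  proof -
    have "Phi n (g \<circ> h) (lsum A) = Phi n g (Phi n h (lsum A))"
      using Phi_comp_lsum[OF _ _ A] that H by blast
    also have "\<dots> = (\<lambda>i. 2 * Phi n g (f h) i + 2 * f g i + lsum A i)"
      using double that by (simp add: Phi_add Phi_smult add.assoc)
    finally show ?thesis
      by (simp add: f_def fun_eq_iff)
  qed
  ultimately obtain m where m: "\<forall>h\<in>H. f h = (\<lambda>i. Phi n h m i - m i)"
    using vanishes unfolding H1_vanishes_def by blast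
  have jk: "j \<in> {1..n}" "h\<^sub>1 \<in> WD n" "h\<^sub>2 \<in> WD n"
    using j k A H by auto
  have "lsum A (-1) = 0" "lsum A (int j) = 1" "lsum A (int k) = 0"
    using j(1) k(2) finite_subset[OF A] by (auto simp: lsum_apply)
  then have "f h\<^sub>1 (int j) = -1" "f h\<^sub>2 (int k) = 0"
    using Phi_apply_flipped[OF jk(2,1) j(3)] Phi_apply_flipped[OF jk(3) k(1,4)]
    by (simp_all add: f_def)
  moreover have "f h\<^sub>1 (int j) = - m (-1) - 2 * m (int j)" "f h\<^sub>2 (int k) = - m (-1) - 2 * m (int k)"
    using m j(2) k(3) Phi_apply_flipped[OF jk(2,1) j(3)] Phi_apply_flipped[OF jk(3) k(1,4)]
    by simp_all
  ultimately show False
    by presburger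
qed

lemma obtain_three_and_more:
  assumes "\<not> card S \<le> 3"
  obtains a b c where "{a, b, c} \<subseteq> S" "a \<noteq> b" "a \<noteq> c" "b \<noteq> c" "S - {a, b, c} \<noteq> {}"
proof -
  obtain T where T: "T \<subseteq> S" "card T = 3"
    using obtain_subset_with_card_n[of 3 S] assms by force
  moreover from this have "S - T \<noteq> {}"
    using assms by (metis Diff_eq_empty_iff subset_antisym order_refl)
  moreover obtain a b c where "T = {a, b, c}" "a \<noteq> b" "a \<noteq> c" "b \<noteq> c"
    using T(2) by (auto simp: card_3_iff)
  ultimately show ?thesis
    using that by blast
qed

lemma four_characters_all_odd:
  fixes G :: "'g set" and mul :: "'g \<Rightarrow> 'g \<Rightarrow> 'g" and c\<^sub>1 c\<^sub>2 c\<^sub>3 c\<^sub>4 :: "'g \<Rightarrow> bool"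
  assumes closed: "\<And>x y. x \<in> G \<Longrightarrow> y \<in> G \<Longrightarrow> mul x y \<in> G"
    and hom: "\<And>x y. x \<in> G \<Longrightarrow> y \<in> G \<Longrightarrow> c\<^sub>1 (mul x y) = (c\<^sub>1 x \<noteq> c\<^sub>1 y)"
      "\<And>x y. x \<in> G \<Longrightarrow> y \<in> G \<Longrightarrow> c\<^sub>2 (mul x y) = (c\<^sub>2 x \<noteq> c\<^sub>2 y)"
      "\<And>x y. x \<in> G \<Longrightarrow> y \<in> G \<Longrightarrow> c\<^sub>3 (mul x y) = (c\<^sub>3 x \<noteq> c\<^sub>3 y)"
      "\<And>x y. x \<in> G \<Longrightarrow> y \<in> G \<Longrightarrow> c\<^sub>4 (mul x y) = (c\<^sub>4 x \<noteq> c\<^sub>4 y)"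
    and sum: "\<And>x. x \<in> G \<Longrightarrow> (c\<^sub>1 x \<noteq> c\<^sub>2 x) = (c\<^sub>3 x \<noteq> c\<^sub>4 x)"
    and nontrivial: "\<exists>x\<in>G. c\<^sub>1 x" "\<exists>x\<in>G. c\<^sub>2 x" "\<exists>x\<in>G. c\<^sub>3 x" "\<exists>x\<in>G. c\<^sub>4 x"
  shows "\<exists>x\<in>G. c\<^sub>1 x \<and> c\<^sub>2 x \<and> c\<^sub>3 x \<and> c\<^sub>4 x"
proof -
  let ?P = "\<lambda>x. c\<^sub>1 x \<and> c\<^sub>2 x \<and> c\<^sub>3 x \<and> c\<^sub>4 x"
  obtain a b d e where odd: "a \<in> G" "c\<^sub>1 a" "b \<in> G" "c\<^sub>2 b" "d \<in> G" "c\<^sub>3 d" "e \<in> G" "c\<^sub>4 e"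
    using nontrivial by blast
  have products: "mul a b \<in> G" "mul a d \<in> G" "mul a e \<in> G" "mul b d \<in> G" "mul b e \<in> G"
    "mul d e \<in> G" "mul (mul a b) d \<in> G" "mul (mul a b) e \<in> G" "mul (mul a d) e \<in> G"
    "mul (mul b d) e \<in> G"
    using closed odd by blast+
  text \<open>One of the 14 nonempty products of the four witnesses works.\<close>
  have "?P a \<or> ?P b \<or> ?P d \<or> ?P e \<or> ?P (mul a b) \<or> ?P (mul a d) \<or> ?P (mul a e)
    \<or> ?P (mul b d) \<or> ?P (mul b e) \<or> ?P (mul d e) \<or> ?P (mul (mul a b) d)
    \<or> ?P (mul (mul a b) e) \<or> ?P (mul (mul a d) e) \<or> ?P (mul (mul b d) e)"
    using sum[OF odd(1)] sum[OF odd(3)] sum[OF odd(5)] sum[OF odd(7)] odd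
    by (simp add: hom closed) sat
  then show ?thesis
    using odd products by blast
qed

lemma sign_parity_nontrivial:
  assumes G: "is_subgroup G (WD n)" and vanishes: "H1_vanishes n G" and min: "minimal_cond n G"
    and A: "A \<subseteq> {1..n}" "A \<noteq> {}" "A \<noteq> {1..n}" and stable: "index_stable G A"
  shows "\<exists>g\<in>G. sign_parity A g"
proof (rule ccontr)
  assume "\<not> ?thesis"
  then have even: "\<forall>g\<in>G. \<not> sign_parity A g"
    by blast
  obtain j where j: "j \<in> A"
    using A(2) by blast
  obtain k where k: "k \<in> {1..n}" "k \<notin> A"
    using A(1,3) by blast
  obtain h\<^sub>1 where h\<^sub>1: "h\<^sub>1 \<in> G" "h\<^sub>1 (j, True) = (j, False)"
    using min j A(1) unfolding minimal_cond_def by blast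
  obtain h\<^sub>2 where h\<^sub>2: "h\<^sub>2 \<in> G" "h\<^sub>2 (k, True) = (k, False)"
    using min k(1) unfolding minimal_cond_def by blast
  show False
    using stable_block_not_H1_vanishes[OF is_subgroupD(1)[OF G] A(1) stable even j h\<^sub>1 k h\<^sub>2]
      vanishes by blast
qed

context
  fixes n :: nat and G :: "(nat \<times> bool \<Rightarrow> nat \<times> bool) set" and A\<^sub>1 A\<^sub>2 A\<^sub>3 A\<^sub>4 :: "nat set"
  assumes G: "is_subgroup G (WD n)" and H1: "condH1 n G" and min: "minimal_cond n G"
    and cover: "A\<^sub>1 \<union> A\<^sub>2 \<union> A\<^sub>3 \<union> A\<^sub>4 = {1..n}"
    and disjoint: "A\<^sub>1 \<inter> A\<^sub>2 = {}" "A\<^sub>1 \<inter> A\<^sub>3 = {}" "A\<^sub>1 \<inter> A\<^sub>4 = {}"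
      "A\<^sub>2 \<inter> A\<^sub>3 = {}" "A\<^sub>2 \<inter> A\<^sub>4 = {}" "A\<^sub>3 \<inter> A\<^sub>4 = {}"
    and nonempty: "A\<^sub>1 \<noteq> {}" "A\<^sub>2 \<noteq> {}" "A\<^sub>3 \<noteq> {}" "A\<^sub>4 \<noteq> {}"
    and stable: "index_stable G A\<^sub>1" "index_stable G A\<^sub>2" "index_stable G A\<^sub>3" "index_stable G A\<^sub>4"
begin

lemma blocks_subset: "A\<^sub>1 \<subseteq> {1..n}" "A\<^sub>2 \<subseteq> {1..n}" "A\<^sub>3 \<subseteq> {1..n}" "A\<^sub>4 \<subseteq> {1..n}"
  using cover by blast+

lemma blocks_finite: "finite A\<^sub>1" "finite A\<^sub>2" "finite A\<^sub>3" "finite A\<^sub>4"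
  using blocks_subset by (auto intro: finite_subset)

lemma H1_vanishes_subgroup: "is_subgroup H G \<Longrightarrow> H1_vanishes n H"
  using H1 by (simp add: condH1_def)

lemma sign_parity_blocks_sum:
  assumes "g \<in> G"
  shows "sign_parity A\<^sub>1 g \<noteq> sign_parity A\<^sub>2 g \<longleftrightarrow> sign_parity A\<^sub>3 g \<noteq> sign_parity A\<^sub>4 g"
proof -
  have "(A\<^sub>1 \<union> A\<^sub>2) \<union> (A\<^sub>3 \<union> A\<^sub>4) = {1..n}"
    using cover by (simp add: Un_assoc)
  moreover have "(A\<^sub>1 \<union> A\<^sub>2) \<inter> (A\<^sub>3 \<union> A\<^sub>4) = {}"
    using disjoint by blast
  moreover have "g \<in> WD n"
    using assms is_subgroupD(1)[OF G] by blast
  ultimately show ?thesis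
    using sign_parity_WD[of g n] sign_parity_Un[of "A\<^sub>1 \<union> A\<^sub>2" "A\<^sub>3 \<union> A\<^sub>4" g]
      sign_parity_Un[OF blocks_finite(1,2) disjoint(1), of g]
      sign_parity_Un[OF blocks_finite(3,4) disjoint(6), of g] blocks_finite
    by simp
qed

lemma odd_on_all_blocks:
  "\<exists>g\<in>G. sign_parity A\<^sub>1 g \<and> sign_parity A\<^sub>2 g \<and> sign_parity A\<^sub>3 g \<and> sign_parity A\<^sub>4 g"
proof -
  have proper: "A\<^sub>1 \<noteq> {1..n}" "A\<^sub>2 \<noteq> {1..n}" "A\<^sub>3 \<noteq> {1..n}" "A\<^sub>4 \<noteq> {1..n}"
    using blocks_subset(1,2) nonempty(1,2) disjoint(1,2,3) by auto
  have "is_subgroup G G"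
    using G by (auto simp: is_subgroup_def)
  note nontrivial = sign_parity_nontrivial[OF G H1_vanishes_subgroup[OF this] min]
  note hom = sign_parity_comp[OF is_subgroupD(1)[OF G]]
  show ?thesis
    by (rule four_characters_all_odd[where mul = "(\<circ>)", OF is_subgroupD(3)[OF G]
          hom[OF blocks_finite(1) stable(1)] hom[OF blocks_finite(2) stable(2)]
          hom[OF blocks_finite(3) stable(3)] hom[OF blocks_finite(4) stable(4)]
          sign_parity_blocks_sum
          nontrivial[OF blocks_subset(1) nonempty(1) proper(1) stable(1)]
          nontrivial[OF blocks_subset(2) nonempty(2) proper(2) stable(2)]
          nontrivial[OF blocks_subset(3) nonempty(3) proper(3) stable(3)]
          nontrivial[OF blocks_subset(4) nonempty(4) proper(4) stable(4)]])
qed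

lemma no_four_stable_blocks: False
proof -
  obtain g where g: "g \<in> G" "sign_parity A\<^sub>1 g" "sign_parity A\<^sub>2 g" "sign_parity A\<^sub>3 g"
    using odd_on_all_blocks by blast
  define H where "H = {h\<in>G. sign_parity A\<^sub>1 h = sign_parity A\<^sub>2 h}"
  have H: "is_subgroup H G"
    unfolding H_def using is_subgroup_sign_parity_eq[OF G blocks_finite(1,2) stable(1,2)] .
  then have HW: "is_subgroup H (WD n)"
    using is_subgroup_superset is_subgroupD(1)[OF G] by blast
  have stable_H: "index_stable H A" if "index_stable G A" for A
    using that is_subgroupD(1)[OF H] by (auto simp: index_stable_def)
  have "g \<in> H"
    using g by (simp add: H_def)
  then obtain h\<^sub>1 j h\<^sub>2 k where "h\<^sub>1 \<in> H" "j \<in> A\<^sub>1" "h\<^sub>1 (j, True) = (j, False)"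
    and "h\<^sub>2 \<in> H" "k \<in> A\<^sub>3" "h\<^sub>2 (k, True) = (k, False)"
    using sign_parity_no_flip[OF HW blocks_finite(1) stable_H[OF stable(1)]]
      sign_parity_no_flip[OF HW blocks_finite(3) stable_H[OF stable(3)]] g(2,4) by blast
  moreover have "\<forall>h\<in>H. \<not> sign_parity (A\<^sub>1 \<union> A\<^sub>2) h"
    using sign_parity_Un[OF blocks_finite(1,2) disjoint(1)] by (simp add: H_def)
  moreover have "index_stable H (A\<^sub>1 \<union> A\<^sub>2)"
    using stable_H[OF stable(1)] stable_H[OF stable(2)] unfolding index_stable_def by blast
  moreover have "A\<^sub>1 \<union> A\<^sub>2 \<subseteq> {1..n}" "k \<in> {1..n}" "k \<notin> A\<^sub>1 \<union> A\<^sub>2"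
    using blocks_subset \<open>k \<in> A\<^sub>3\<close> disjoint by auto
  ultimately have "\<not> H1_vanishes n H"
    using stable_block_not_H1_vanishes[OF is_subgroupD(1)[OF HW]] by blast
  then show False
    using H1_vanishes_subgroup[OF H] by blast
qed

end

theorem theorem4p3:
  fixes n :: nat and G :: "(nat \<times> bool \<Rightarrow> nat \<times> bool) set"
  assumes "is_subgroup G (WD n)"
    and "condH1 n G"
    and "minimal_cond n G"
  shows "card (orbits n G) \<le> 3"
proof (rule ccontr)
  assume "\<not> card (orbits n G) \<le> 3"
  then obtain Q\<^sub>1 Q\<^sub>2 Q\<^sub>3 where Q: "{Q\<^sub>1, Q\<^sub>2, Q\<^sub>3} \<subseteq> orbits n G" "Q\<^sub>1 \<noteq> Q\<^sub>2" "Q\<^sub>1 \<noteq> Q\<^sub>3" "Q\<^sub>2 \<noteq> Q\<^sub>3"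
    and rest: "orbits n G - {Q\<^sub>1, Q\<^sub>2, Q\<^sub>3} \<noteq> {}"
    by (rule obtain_three_and_more)
  let ?R = "orbits n G - {Q\<^sub>1, Q\<^sub>2, Q\<^sub>3}"
  have sub: "{Q\<^sub>1} \<subseteq> orbits n G" "{Q\<^sub>2} \<subseteq> orbits n G" "{Q\<^sub>3} \<subseteq> orbits n G" "?R \<subseteq> orbits n G"
    using Q(1) by auto
  have "{Q\<^sub>1} \<union> {Q\<^sub>2} \<union> {Q\<^sub>3} \<union> ?R = orbits n G"
    using Q(1) by auto
  then have cover: "index_block {Q\<^sub>1} \<union> index_block {Q\<^sub>2} \<union> index_block {Q\<^sub>3} \<union> index_block ?R = {1..n}"
    using index_block_orbits[OF assms(1)] by (metis index_block_Un)
  note disjoint = index_block_disjoint[OF assms(1,3)]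
    and nonempty = index_block_nonempty[OF assms(1)]
    and stable = index_stable_index_block[OF assms(1,3)]
  show False
    using no_four_stable_blocks[OF assms cover
        disjoint[OF sub(1,2)] disjoint[OF sub(1,3)] disjoint[OF sub(1,4)]
        disjoint[OF sub(2,3)] disjoint[OF sub(2,4)] disjoint[OF sub(3,4)]
        nonempty[OF sub(1)] nonempty[OF sub(2)] nonempty[OF sub(3)] nonempty[OF sub(4) rest]
        stable[OF sub(1)] stable[OF sub(2)] stable[OF sub(3)] stable[OF sub(4)]]
      Q(2-4) by auto
qed

end
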